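(* Let $\delta\geq0$, $0\leq2\theta<\alpha$, $\varepsilon>0$ with $\varepsilon^{\alpha-2\theta}=\frac14$, and $$\lambda_\pm=\frac{|\xi|^{2\theta}}{2(1+|\xi|^{2\delta})}\left(-1\pm\sqrt{1-4|\xi|^{2(\alpha-2\theta)}(1+|\xi|^{2\delta})}\right).$$ If $|\xi|<\varepsilon$ then: (i) $-4(2-\sqrt2)|\xi|^{2(\alpha-\theta)}\leq\lambda_+\leq-|\xi|^{2(\alpha-\theta)}$ (so $\lambda_+\approx-|\xi|^{2(\alpha-\theta)}$); (ii) $-|\xi|^{2\theta}\leq\lambda_-\leq-\frac14\left(1+\frac1{\sqrt2}\right)|\xi|^{2\theta}$ (so $\lambda_-\approx-|\xi|^{2\theta}$); (iii) $\lambda_+-\lambda_-\approx|\xi|^{2\theta}$.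
   Context: $g\approx f$ means $g\lesssim f$ and $f\lesssim g$, where $f\lesssim g$ means $0\leq f\leq Cg$ for a constant $C>0$ independent of $\xi$ (for negative quantities, $\lambda\approx-h$ means $-\lambda\approx h$). *)

theory Defs
  imports "HOL-Analysis.Analysis"
begin

definition lam_plus :: "real \<Rightarrow> real \<Rightarrow> real \<Rightarrow> 'a::euclidean_space \<Rightarrow> real" where
  "lam_plus \<alpha> \<theta> \<delta> \<xi> =
     norm \<xi> powr (2*\<theta>) / (2 * (1 + norm \<xi> powr (2*\<delta>))) *
     (-1 + sqrt (1 - 4 * norm \<xi> powr (2*(\<alpha> - 2*\<theta>)) * (1 + norm \<xi> powr (2*\<delta>))))"

definition lam_minus :: "real \<Rightarrow> real \<Rightarrow> real \<Rightarrow> 'a::euclidean_space \<Rightarrow> real" where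
  "lam_minus \<alpha> \<theta> \<delta> \<xi> =
     norm \<xi> powr (2*\<theta>) / (2 * (1 + norm \<xi> powr (2*\<delta>))) *
     (-1 - sqrt (1 - 4 * norm \<xi> powr (2*(\<alpha> - 2*\<theta>)) * (1 + norm \<xi> powr (2*\<delta>))))"

end

theory Submission
  imports Defs
begin

text \<open>Write \<open>s = |\<xi>| powr 2\<theta>\<close>, \<open>q = |\<xi>| powr 2(\<alpha> - 2\<theta>)\<close>, \<open>D = 1 + |\<xi>| powr 2\<delta>\<close> and
  \<open>w = sqrt (1 - 4qD)\<close>; then \<open>\<lambda>\<^sub>\<plusminus> = s (-1 \<plusminus> w) / (2D)\<close>. For \<open>|\<xi>| < \<epsilon>\<close> we get \<open>q < 1/16\<close> and
  \<open>1 \<le> D \<le> 2\<close>, hence \<open>1/sqrt 2 \<le> w \<le> 1\<close>. Rationalising, \<open>(-1 + w) / (2D) = -2q / (1 + w)\<close>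
  is comparable to \<open>-q\<close>, while \<open>(-1 - w) / (2D)\<close> and the gap \<open>w / D\<close> are comparable
  to constants.\<close>

definition eig_plus :: "real \<Rightarrow> real \<Rightarrow> real" where
  "eig_plus q D = (-1 + sqrt (1 - 4*q*D)) / (2*D)"

definition eig_minus :: "real \<Rightarrow> real \<Rightarrow> real" where
  "eig_minus q D = (-1 - sqrt (1 - 4*q*D)) / (2*D)"

lemma sqrt_discriminant_bounds:
  fixes q D :: real
  assumes "0 \<le> q" "0 \<le> D" "4*q*D \<le> 1/2"
  shows "1/sqrt 2 \<le> sqrt (1 - 4*q*D)" and "sqrt (1 - 4*q*D) \<le> 1"
proof -
  have "sqrt (1/2) \<le> sqrt (1 - 4*q*D)"
    using assms(3) by (intro real_sqrt_le_mono) simp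
  then show "1/sqrt 2 \<le> sqrt (1 - 4*q*D)"
    by (simp add: real_sqrt_divide)
  show "sqrt (1 - 4*q*D) \<le> 1"
    using assms(1,2) by simp
qed

lemma eig_plus_rationalised:
  fixes q D :: real
  assumes "0 < D" "4*q*D \<le> 1"
  shows "eig_plus q D = -2*q / (1 + sqrt (1 - 4*q*D))"
proof -
  define w where "w = sqrt (1 - 4*q*D)"
  have "w\<^sup>2 = 1 - 4*q*D" "0 \<le> w"
    using assms(2) by (simp_all add: w_def)
  then have "(-1 + w) * (1 + w) = -2*q * (2*D)"
    by (simp add: algebra_simps power2_eq_square)
  then show ?thesis
    using assms(1) \<open>0 \<le> w\<close> unfolding eig_plus_def w_def[symmetric]
    by (simp add: field_simps)
qed

lemma eig_plus_bounds:
  fixes q D :: real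
  assumes "0 \<le> q" "0 < D" "4*q*D \<le> 1/2"
  shows "-2*(2 - sqrt 2)*q \<le> eig_plus q D" and "eig_plus q D \<le> -q"
proof -
  define w where "w = sqrt (1 - 4*q*D)"
  have w: "1/sqrt 2 \<le> w" "w \<le> 1"
    using sqrt_discriminant_bounds[of q D] assms unfolding w_def by auto
  have eq: "eig_plus q D = -2*q / (1 + w)"
    using eig_plus_rationalised[of D q] assms unfolding w_def by simp
  have "0 < 1/sqrt 2" by simp
  then have "0 < 1 + 1/sqrt 2" "0 < 1 + w"
    using w(1) by linarith+
  then have "2 / (1 + w) \<le> 2 / (1 + 1/sqrt 2)"
    using w(1) by (intro divide_left_mono mult_pos_pos) auto
  also have "2 / (1 + 1/sqrt 2) = 2*(2 - sqrt 2)"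
  proof -
    have "1/sqrt 2 = sqrt 2 / 2" by (simp add: field_simps)
    then have "(1 + 1/sqrt 2) * (2*(2 - sqrt 2)) = 2"
      by (simp add: algebra_simps)
    then show ?thesis
      using \<open>0 < 1 + 1/sqrt 2\<close> by (simp add: divide_eq_eq mult.commute)
  qed
  finally have "2*q / (1 + w) \<le> 2*(2 - sqrt 2)*q"
    using assms(1) mult_right_mono by fastforce
  then show "-2*(2 - sqrt 2)*q \<le> eig_plus q D"
    unfolding eq by (simp add: algebra_simps)
  have "q \<le> 2*q / (1 + w)"
    using w(2) assms(1) \<open>0 < 1 + w\<close> mult_left_mono[of w 1 q]
    by (simp add: field_simps)
  then show "eig_plus q D \<le> -q"
    unfolding eq by simp
qed

lemma eig_minus_bounds:
  fixes q D :: real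
  assumes "0 \<le> q" "1 \<le> D" "D \<le> 2" "4*q*D \<le> 1/2"
  shows "-1 \<le> eig_minus q D" and "eig_minus q D \<le> -(1/4)*(1 + 1/sqrt 2)"
proof -
  define w where "w = sqrt (1 - 4*q*D)"
  have w: "1/sqrt 2 \<le> w" "w \<le> 1"
    using sqrt_discriminant_bounds[of q D] assms unfolding w_def by auto
  have "1 + w \<le> 2*D"
    using w(2) assms(2) by simp
  then show "-1 \<le> eig_minus q D"
    using assms(2) unfolding eig_minus_def w_def[symmetric] by (simp add: field_simps)
  have "(1 + 1/sqrt 2) * (2*D) \<le> (1 + w) * 4"
    using w(1) assms(2,3) order_trans[OF _ w(1), of 0] by (intro mult_mono) auto
  then show "eig_minus q D \<le> -(1/4)*(1 + 1/sqrt 2)"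
    using assms(2) unfolding eig_minus_def w_def[symmetric] by (simp add: field_simps)
qed

lemma eig_gap_bounds:
  fixes q D :: real
  assumes "0 \<le> q" "1 \<le> D" "D \<le> 2" "4*q*D \<le> 1/2"
  shows "1/4 \<le> eig_plus q D - eig_minus q D" and "eig_plus q D - eig_minus q D \<le> 1"
proof -
  define w where "w = sqrt (1 - 4*q*D)"
  have w: "1/sqrt 2 \<le> w" "w \<le> 1"
    using sqrt_discriminant_bounds[of q D] assms unfolding w_def by auto
  have gap: "eig_plus q D - eig_minus q D = w / D"
    using assms(2) unfolding eig_plus_def eig_minus_def w_def[symmetric]
    by (simp add: field_simps)
  have "1/2 \<le> 1/sqrt 2"
    using sqrt2_less_2 by (simp add: field_simps)
  then have "D \<le> 4*w"
    using w(1) assms(3) by linarith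
  then show "1/4 \<le> eig_plus q D - eig_minus q D"
    using assms(2) unfolding gap by (simp add: field_simps)
  show "eig_plus q D - eig_minus q D \<le> 1"
    using w(2) assms(2) unfolding gap by (simp add: field_simps)
qed

lemma lam_plus_eig_plus:
  "lam_plus \<alpha> \<theta> \<delta> \<xi> =
     norm \<xi> powr (2*\<theta>) * eig_plus (norm \<xi> powr (2*(\<alpha> - 2*\<theta>))) (1 + norm \<xi> powr (2*\<delta>))"
  unfolding lam_plus_def eig_plus_def by simp

lemma lam_minus_eig_minus:
  "lam_minus \<alpha> \<theta> \<delta> \<xi> =
     norm \<xi> powr (2*\<theta>) * eig_minus (norm \<xi> powr (2*(\<alpha> - 2*\<theta>))) (1 + norm \<xi> powr (2*\<delta>))"
  unfolding lam_minus_def eig_minus_def by simp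

lemma small_frequency_bounds:
  fixes r \<epsilon> \<alpha> \<theta> \<delta> :: real
  assumes "0 < r" "r < \<epsilon>" "0 \<le> \<delta>" "2*\<theta> < \<alpha>" "\<epsilon> powr (\<alpha> - 2*\<theta>) = 1/4"
  shows "r powr (2*(\<alpha> - 2*\<theta>)) < 1/16" and "r powr (2*\<delta>) \<le> 1"
proof -
  have pos: "0 < \<alpha> - 2*\<theta>" using assms(4) by simp
  have small: "r powr (\<alpha> - 2*\<theta>) < 1/4"
    using powr_less_mono2[OF pos, of r \<epsilon>] assms(1,2,5) by simp
  have "r powr (2*(\<alpha> - 2*\<theta>)) = r powr (\<alpha> - 2*\<theta>) * r powr (\<alpha> - 2*\<theta>)"
    by (simp add: powr_add[symmetric])
  also have "\<dots> < 1/4 * (1/4)"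
    using small by (intro mult_strict_mono) auto
  finally show "r powr (2*(\<alpha> - 2*\<theta>)) < 1/16"
    by simp
  have "\<epsilon> < 1"
  proof (rule ccontr)
    assume "\<not> \<epsilon> < 1"
    then have "1 \<le> \<epsilon> powr (\<alpha> - 2*\<theta>)"
      using pos by (intro ge_one_powr_ge_zero) auto
    then show False using assms(5) by simp
  qed
  then show "r powr (2*\<delta>) \<le> 1"
    using assms(1-3) powr_mono2[of "2*\<delta>" r 1] by simp
qed

lemma
  fixes \<alpha> \<theta> \<delta> \<epsilon> :: real and \<xi> :: "'a::euclidean_space"
  assumes "0 \<le> \<delta>" "2*\<theta> < \<alpha>" "\<epsilon> powr (\<alpha> - 2*\<theta>) = 1/4" "\<xi> \<noteq> 0" "norm \<xi> < \<epsilon>"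
  shows lam_plus_bounds:
      "-4*(2 - sqrt 2) * norm \<xi> powr (2*(\<alpha>-\<theta>)) \<le> lam_plus \<alpha> \<theta> \<delta> \<xi>"
      "lam_plus \<alpha> \<theta> \<delta> \<xi> \<le> - (norm \<xi> powr (2*(\<alpha>-\<theta>)))"
    and lam_minus_bounds:
      "- (norm \<xi> powr (2*\<theta>)) \<le> lam_minus \<alpha> \<theta> \<delta> \<xi>"
      "lam_minus \<alpha> \<theta> \<delta> \<xi> \<le> -(1/4)*(1 + 1/sqrt 2) * norm \<xi> powr (2*\<theta>)"
    and lam_gap_bounds:
      "(1/4) * norm \<xi> powr (2*\<theta>) \<le> lam_plus \<alpha> \<theta> \<delta> \<xi> - lam_minus \<alpha> \<theta> \<delta> \<xi>"
      "lam_plus \<alpha> \<theta> \<delta> \<xi> - lam_minus \<alpha> \<theta> \<delta> \<xi> \<le> norm \<xi> powr (2*\<theta>)"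
proof -
  define s q D where "s = norm \<xi> powr (2*\<theta>)" and "q = norm \<xi> powr (2*(\<alpha> - 2*\<theta>))"
    and "D = 1 + norm \<xi> powr (2*\<delta>)"
  have r: "0 < norm \<xi>" using assms(4) by simp
  have q: "0 \<le> q" "q < 1/16" and D: "1 \<le> D" "D \<le> 2"
    using small_frequency_bounds[OF r assms(5,1,2,3)] unfolding q_def D_def by auto
  have qD: "4*q*D \<le> 1/2"
    using mult_mono[of q "1/16" D 2] q D by simp
  have s: "0 \<le> s" unfolding s_def by simp
  have sq: "norm \<xi> powr (2*(\<alpha>-\<theta>)) = s*q"
    unfolding s_def q_def by (simp add: powr_add[symmetric] algebra_simps)
  note plus = eig_plus_bounds[OF q(1) _ qD] and minus = eig_minus_bounds[OF q(1) D qD]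
    and gap = eig_gap_bounds[OF q(1) D qD]
  note scale = mult_left_mono[OF _ s]
  have "0 \<le> 2 - sqrt 2" using sqrt2_less_2 by simp
  then have "2*(2 - sqrt 2)*q \<le> 4*(2 - sqrt 2)*q"
    using q(1) by (intro mult_right_mono) auto
  moreover have "-2*(2 - sqrt 2)*q \<le> eig_plus q D" using plus(1) D by simp
  ultimately have plus': "-4*(2 - sqrt 2)*q \<le> eig_plus q D" by linarith
  then show "-4*(2 - sqrt 2) * norm \<xi> powr (2*(\<alpha>-\<theta>)) \<le> lam_plus \<alpha> \<theta> \<delta> \<xi>"
    using scale[OF plus']
    unfolding lam_plus_eig_plus sq s_def[symmetric] q_def[symmetric] D_def[symmetric]
    by (simp add: algebra_simps)
  show "lam_plus \<alpha> \<theta> \<delta> \<xi> \<le> - (norm \<xi> powr (2*(\<alpha>-\<theta>)))"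
    using scale[OF plus(2)] D
    unfolding lam_plus_eig_plus sq s_def[symmetric] q_def[symmetric] D_def[symmetric]
    by simp
  show "- (norm \<xi> powr (2*\<theta>)) \<le> lam_minus \<alpha> \<theta> \<delta> \<xi>"
       "lam_minus \<alpha> \<theta> \<delta> \<xi> \<le> -(1/4)*(1 + 1/sqrt 2) * norm \<xi> powr (2*\<theta>)"
    using scale[OF minus(1)] scale[OF minus(2)]
    unfolding lam_minus_eig_minus s_def[symmetric] q_def[symmetric] D_def[symmetric]
    by (simp_all add: algebra_simps)
  show "(1/4) * norm \<xi> powr (2*\<theta>) \<le> lam_plus \<alpha> \<theta> \<delta> \<xi> - lam_minus \<alpha> \<theta> \<delta> \<xi>"
       "lam_plus \<alpha> \<theta> \<delta> \<xi> - lam_minus \<alpha> \<theta> \<delta> \<xi> \<le> norm \<xi> powr (2*\<theta>)"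
    using scale[OF gap(1)] scale[OF gap(2)]
    unfolding lam_plus_eig_plus lam_minus_eig_minus s_def[symmetric] q_def[symmetric]
      D_def[symmetric]
    by (simp_all add: algebra_simps)
qed

theorem lemma2p2:
  fixes \<alpha> \<theta> \<delta> \<epsilon> :: real
  assumes "\<delta> \<ge> 0" and "0 \<le> 2*\<theta>" and "2*\<theta> < \<alpha>" and "\<epsilon> > 0"
    and "\<epsilon> powr (\<alpha> - 2*\<theta>) = 1/4"
  shows "(\<forall>\<xi>::'a::euclidean_space. \<xi> \<noteq> 0 \<and> norm \<xi> < \<epsilon> \<longrightarrow>
            -4*(2 - sqrt 2) * norm \<xi> powr (2*(\<alpha>-\<theta>)) \<le> lam_plus \<alpha> \<theta> \<delta> \<xi> \<and>
            lam_plus \<alpha> \<theta> \<delta> \<xi> \<le> - (norm \<xi> powr (2*(\<alpha>-\<theta>))) \<and>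
            - (norm \<xi> powr (2*\<theta>)) \<le> lam_minus \<alpha> \<theta> \<delta> \<xi> \<and>
            lam_minus \<alpha> \<theta> \<delta> \<xi> \<le> -(1/4)*(1 + 1/sqrt 2) * norm \<xi> powr (2*\<theta>))
       \<and> (\<exists>c C. 0 < c \<and> 0 < C \<and>
            (\<forall>\<xi>::'a. \<xi> \<noteq> 0 \<and> norm \<xi> < \<epsilon> \<longrightarrow>
               c * norm \<xi> powr (2*\<theta>) \<le> lam_plus \<alpha> \<theta> \<delta> \<xi> - lam_minus \<alpha> \<theta> \<delta> \<xi> \<and>
               lam_plus \<alpha> \<theta> \<delta> \<xi> - lam_minus \<alpha> \<theta> \<delta> \<xi> \<le> C * norm \<xi> powr (2*\<theta>)))"
  using lam_plus_bounds[OF assms(1,3,5)] lam_minus_bounds[OF assms(1,3,5)]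
    lam_gap_bounds[OF assms(1,3,5)]
  by (intro conjI exI[of _ "1/4"] exI[of _ 1]) auto

end
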